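(* Let $\mathcal{D}$ be an abstract system of proof notations, $s\in\mathbb{N}$, and let $d\in\mathcal{D}$ be $s$-bounded in $\mathcal{D}$. Then $\mathsf Ed$ is $o(d)\cdot(s+2)$-bounded in $\mathbb{E}(\mathcal{D})$, and $\mathsf E\mathsf Ed$ is $2^{o(d)}\cdot o(d)\cdot(s+4)$-bounded in $\mathbb{E}(\mathcal{D})$.
   Context: An abstract system of proof notations is a set $\mathcal{D}$ with functions $|\cdot|,o(\cdot)\colon\mathcal{D}\to\mathbb{N}\setminus\{0\}$ (size and height) and a relation $\to\subseteq\mathcal{D}\times\mathcal{D}$ such that $d\to d'$ implies $o(d')<o(d)$. The cut-elimination closure $\mathbb{E}(\mathcal{D})$ is the abstract system of formal terms inductively generated by: every $d\in\mathcal{D}$ is in $\mathbb{E}(\mathcal{D})$ (with size and height inherited); if $d,e\in\mathbb{E}(\mathcal{D})$ then $\mathsf{I}d,\ \mathsf{R}de,\ \mathsf{E}d\in\mathbb{E}(\mathcal{D})$ ($\mathsf I,\mathsf R,\mathsf E$ new symbols), with $|\mathsf Id|=|d|+1$, $|\mathsf Rde|=|d|+|e|+1$, $|\mathsf Ed|=|d|+1$, $o(\mathsf Id)=o(d)$, $o(\mathsf Rde)=o(d)+o(e)$, $o(\mathsf Ed)=2^{o(d)}-1$. The relation $\to$ on $\mathbb{E}(\mathcal{D})$ is inductively generated by: $d\to d'$ in $\mathcal{D}$ implies $d\to d'$; $d\to d'$ implies $\mathsf Id\to\mathsf Id'$; $e\to e'$ implies $\mathsf Rde\to\mathsf Rde'$;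 $d\to d'$ implies $\mathsf Ed\to\mathsf Ed'$; $\mathsf Rde\to\mathsf Id$ always; and $d\to d'$ together with $d\to d''$ implies $\mathsf Ed\to\mathsf R(\mathsf Ed')(\mathsf Ed'')$. For an abstract system $\mathcal{X}$ (here $\mathcal{D}$ or $\mathbb{E}(\mathcal{D})$) and $x\in\mathcal{X}$, $x$ is called $t$-bounded in $\mathcal{X}$ if every $x'\in\mathcal{X}$ with $x\to^\ast x'$ (reflexive transitive closure of the relation $\to$ of $\mathcal{X}$) satisfies $|x'|\le t$. *)

theory Defs
  imports Main
begin

definition proof_notation_system ::
  "('a \<Rightarrow> nat) \<Rightarrow> ('a \<Rightarrow> nat) \<Rightarrow> ('a \<Rightarrow> 'a \<Rightarrow> bool) \<Rightarrow> bool" where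
  "proof_notation_system sz ht step \<longleftrightarrow>
     (\<forall>d. 0 < sz d) \<and> (\<forall>d. 0 < ht d) \<and> (\<forall>d d'. step d d' \<longrightarrow> ht d' < ht d)"

text \<open>Formal terms of the cut-elimination closure E(D).\<close>
datatype 'a eterm = Base 'a | I "'a eterm" | R "'a eterm" "'a eterm" | E "'a eterm"

primrec esize :: "('a \<Rightarrow> nat) \<Rightarrow> 'a eterm \<Rightarrow> nat" where
  "esize sz (Base d) = sz d"
| "esize sz (I d) = esize sz d + 1"
| "esize sz (R d e) = esize sz d + esize sz e + 1"
| "esize sz (E d) = esize sz d + 1"

primrec eheight :: "('a \<Rightarrow> nat) \<Rightarrow> 'a eterm \<Rightarrow> nat" where
  "eheight ht (Base d) = ht d"
| "eheight ht (I d) = eheight ht d"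
| "eheight ht (R d e) = eheight ht d + eheight ht e"
| "eheight ht (E d) = 2 ^ eheight ht d - 1"

inductive estep :: "('a \<Rightarrow> 'a \<Rightarrow> bool) \<Rightarrow> 'a eterm \<Rightarrow> 'a eterm \<Rightarrow> bool"
  for step :: "'a \<Rightarrow> 'a \<Rightarrow> bool" where
  base: "step d d' \<Longrightarrow> estep step (Base d) (Base d')"
| I_cong: "estep step d d' \<Longrightarrow> estep step (I d) (I d')"
| R_cong: "estep step e e' \<Longrightarrow> estep step (R d e) (R d e')"
| E_cong: "estep step d d' \<Longrightarrow> estep step (E d) (E d')"
| R_red: "estep step (R d e) (I d)"
| E_red: "estep step d d' \<Longrightarrow> estep step d d'' \<Longrightarrow> estep step (E d) (R (E d') (E d''))"

definition bounded :: "('b \<Rightarrow> 'b \<Rightarrow> bool) \<Rightarrow> ('b \<Rightarrow> nat) \<Rightarrow> nat \<Rightarrow> 'b \<Rightarrow> bool" where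
  "bounded rel sz t x \<longleftrightarrow> (\<forall>x'. rel\<^sup>*\<^sup>* x x' \<longrightarrow> sz x' \<le> t)"

end

theory Submission
  imports Defs
begin

text \<open>Every reduct of \<open>E d\<close> is a right-nested chain of \<open>I\<close> and \<open>R\<close> nodes whose left
  arguments and terminal leaf have the form \<open>E g\<close> with \<open>g\<close> a reduct of \<open>d\<close>. Rank such a
  chain by its length plus the largest height \<open>o(g)\<close> of a leaf body. Reducing a leaf \<open>E g\<close>
  either lowers \<open>o(g)\<close> or unfolds it into \<open>R (E g') (E g'')\<close> with \<open>o(g'), o(g'') < o(g)\<close>,
  so the rank never increases. The rank of \<open>E d\<close> is \<open>o(d)\<close> and every leaf has size at most
  \<open>s + 1\<close>, whence the bound \<open>o(d)(s + 2)\<close>. One level up, the leaves are \<open>E g\<close> with \<open>g\<close> a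
  chain of the first kind of rank at most \<open>o(d)\<close>, hence of size below \<open>o(d)(s + 2)\<close>, and the
  initial rank is \<open>o(E d) = 2^o(d) - 1\<close>.\<close>

lemma esize_pos: "(\<And>x. 0 < sz x) \<Longrightarrow> 0 < esize sz t"
  by (induction t) auto

lemma eheight_pos:
  assumes "\<And>x. 0 < ht x" shows "0 < eheight ht t"
proof (induction t)
  case (E t)
  then have "1 < (2::nat) ^ eheight ht t" by (intro one_less_power) simp_all
  then show ?case by simp
qed (simp_all add: assms)

lemma pow2_pred_add_less:
  assumes "b < a" "c < a" "0 < b" "0 < c"
  shows "(2::nat) ^ b - 1 + (2 ^ c - 1) < 2 ^ a - 1"
proof -
  obtain k where k: "a = Suc k" using assms by (cases a) auto
  have "(2::nat) ^ b \<le> 2 ^ k" "(2::nat) ^ c \<le> 2 ^ k"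
    using assms k by (auto intro: power_increasing)
  moreover have "(1::nat) \<le> 2 ^ b" "(1::nat) \<le> 2 ^ c" by simp_all
  moreover have "(2::nat) ^ a = 2 * 2 ^ k" using k by simp
  ultimately show ?thesis by linarith
qed

lemma eheight_estep_less:
  assumes pos: "\<And>x. 0 < ht x" and dec: "\<And>x y. step x y \<Longrightarrow> ht y < ht x"
  shows "estep step t t' \<Longrightarrow> eheight ht t' < eheight ht t"
proof (induction rule: estep.induct)
  case (E_cong d d')
  then have "(2::nat) ^ eheight ht d' < 2 ^ eheight ht d"
    by (intro power_strict_increasing) auto
  moreover have "(1::nat) \<le> 2 ^ eheight ht d'" by simp
  ultimately show ?case by (simp only: eheight.simps)
next
  case (R_red d e)
  then show ?case using eheight_pos[of ht e] pos by simp
next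
  case (E_red d d' d'')
  then show ?case using pow2_pred_add_less eheight_pos[of ht] pos by simp
qed (auto simp: dec)

lemma proof_notation_system_closure:
  assumes "proof_notation_system sz ht step"
  shows "proof_notation_system (esize sz) (eheight ht) (estep step)"
  using assms esize_pos eheight_pos eheight_estep_less
  unfolding proof_notation_system_def by blast

inductive spine :: "('a eterm \<Rightarrow> bool) \<Rightarrow> 'a eterm \<Rightarrow> bool" for L where
  leaf: "L t \<Longrightarrow> spine L t"
| I: "spine L u \<Longrightarrow> spine L (I u)"
| R: "L l \<Longrightarrow> spine L v \<Longrightarrow> spine L (R l v)"

text \<open>On a spine the \<open>E\<close> equation is only reached at leaves.\<close>
primrec spine_rank :: "('a \<Rightarrow> nat) \<Rightarrow> 'a eterm \<Rightarrow> nat" where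
  "spine_rank ht (Base x) = 1"
| "spine_rank ht (I u) = spine_rank ht u + 1"
| "spine_rank ht (R u v) = max (spine_rank ht u) (spine_rank ht v) + 1"
| "spine_rank ht (E g) = eheight ht g"

lemma spine_rank_pos:
  assumes "\<And>x. 0 < ht x" shows "0 < spine_rank ht t"
  by (cases t) (simp_all add: eheight_pos assms)

definition reduction_closed ::
  "('a \<Rightarrow> 'a \<Rightarrow> bool) \<Rightarrow> ('a \<Rightarrow> nat) \<Rightarrow> ('a eterm \<Rightarrow> bool) \<Rightarrow> bool" where
  "reduction_closed step ht L \<longleftrightarrow>
     (\<forall>l t'. L l \<longrightarrow> estep step l t' \<longrightarrow> spine L t' \<and> spine_rank ht t' \<le> spine_rank ht l)"

lemma spine_estep:
  assumes closed: "reduction_closed step ht L"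
  shows "spine L t \<Longrightarrow> estep step t t' \<Longrightarrow> spine L t' \<and> spine_rank ht t' \<le> spine_rank ht t"
proof (induction t arbitrary: t' rule: spine.induct)
  case (leaf t)
  then show ?case using closed unfolding reduction_closed_def by blast
next
  case (I u)
  from I.prems obtain u' where "t' = I u'" "estep step u u'"
    by (cases rule: estep.cases) auto
  then show ?case using I.IH by (auto intro: spine.I)
next
  case (R l v)
  from R.prems consider v' where "t' = R l v'" "estep step v v'" | "t' = I l"
    by (cases rule: estep.cases) auto
  then show ?case
  proof cases
    case (1 v')
    then show ?thesis using R.IH[of v'] R.hyps by (auto intro: spine.R simp: le_max_iff_disj)
  next
    case 2
    then show ?thesis using R.hyps by (auto intro: spine.I spine.leaf)
  qed
qed

lemma spine_reducts:
  assumes "reduction_closed step ht L" and "(estep step)\<^sup>*\<^sup>* t t'" and "spine L t"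
  shows "spine L t' \<and> spine_rank ht t' \<le> spine_rank ht t"
  using assms(2)
proof (induction rule: rtranclp_induct)
  case (step u u')
  then show ?case using spine_estep[OF assms(1), of u u'] by linarith
qed (simp add: assms(3))

lemma spine_esize:
  assumes pos: "\<And>x. 0 < ht x" and leaf_size: "\<And>l. L l \<Longrightarrow> esize sz l + 1 \<le> C"
  shows "spine L t \<Longrightarrow> esize sz t + 1 \<le> spine_rank ht t * C"
proof (induction t rule: spine.induct)
  case (leaf t)
  have "C \<le> spine_rank ht t * C" using spine_rank_pos[of ht t, OF pos] by simp
  then show ?case using leaf_size[OF leaf] by linarith
next
  case (I u)
  then have "1 \<le> C" by (cases C) simp_all
  then show ?case using I.IH by simp
next
  case (R l v)
  have "spine_rank ht v * C \<le> max (spine_rank ht l) (spine_rank ht v) * C" by simp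
  moreover have "spine_rank ht (R l v) * C = max (spine_rank ht l) (spine_rank ht v) * C + C"
    by simp
  moreover have "esize sz (R l v) + 1 = esize sz l + esize sz v + 2" by simp
  ultimately show ?case using R.IH leaf_size[OF R.hyps(1)] by linarith
qed

lemma spine_bounded:
  assumes "proof_notation_system sz ht step" and "reduction_closed step ht L"
    and leaf_size: "\<And>l. L l \<Longrightarrow> esize sz l + 1 \<le> C" and "spine L t"
  shows "bounded (estep step) (esize sz) (spine_rank ht t * C) t"
  unfolding bounded_def
proof (intro allI impI)
  have pos: "\<And>x. 0 < ht x" using assms(1) by (simp add: proof_notation_system_def)
  fix t' assume "(estep step)\<^sup>*\<^sup>* t t'"
  with spine_reducts[OF assms(2) _ assms(4)]
  have spine: "spine L t'" and rank: "spine_rank ht t' \<le> spine_rank ht t" by simp_all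
  have "esize sz t' + 1 \<le> spine_rank ht t' * C" by (rule spine_esize[of ht, OF pos leaf_size spine])
  also have "\<dots> \<le> spine_rank ht t * C" using rank by simp
  finally show "esize sz t' \<le> spine_rank ht t * C" by simp
qed

definition Base_reduct :: "('a \<Rightarrow> 'a \<Rightarrow> bool) \<Rightarrow> 'a \<Rightarrow> 'a eterm \<Rightarrow> bool" where
  "Base_reduct step d t \<longleftrightarrow> (\<exists>x. step\<^sup>*\<^sup>* d x \<and> t = Base x)"

lemma reduction_closed_Base_reduct: "reduction_closed step ht (Base_reduct step d)"
  unfolding reduction_closed_def Base_reduct_def
  by (auto elim!: estep.cases intro!: spine.leaf elim: rtranclp.rtrancl_into_rtrancl)

definition E_spine_leaf :: "('a \<Rightarrow> nat) \<Rightarrow> ('a eterm \<Rightarrow> bool) \<Rightarrow> nat \<Rightarrow> 'a eterm \<Rightarrow> bool" where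
  "E_spine_leaf ht L h t \<longleftrightarrow> (\<exists>g. t = E g \<and> spine L g \<and> spine_rank ht g \<le> h)"

lemma reduction_closed_E_spine_leaf:
  assumes pns: "proof_notation_system sz ht step" and closed: "reduction_closed step ht L"
  shows "reduction_closed step ht (E_spine_leaf ht L h)"
  unfolding reduction_closed_def
proof (intro allI impI)
  fix l t' assume "E_spine_leaf ht L h l" and red: "estep step l t'"
  then obtain g where g: "l = E g" "spine L g" "spine_rank ht g \<le> h"
    unfolding E_spine_leaf_def by blast
  have "eheight ht g' < eheight ht g" if "estep step g g'" for g'
    using proof_notation_system_closure[OF pns] that by (simp add: proof_notation_system_def)
  then have reduct: "E_spine_leaf ht L h (E g') \<and> eheight ht g' < eheight ht g"
    if "estep step g g'" for g'
    using spine_estep[OF closed g(2) that] g(3) that unfolding E_spine_leaf_def by fastforce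
  from red g(1) show "spine (E_spine_leaf ht L h) t' \<and> spine_rank ht t' \<le> spine_rank ht l"
  proof (cases rule: estep.cases)
    case (E_cong _ g')
    then show ?thesis using reduct[of g'] g(1) by (auto intro: spine.leaf)
  next
    case (E_red _ g' g'')
    then show ?thesis using reduct[of g'] reduct[of g''] g(1) by (auto intro: spine.intros)
  qed simp_all
qed

lemma E_spine_leaf_esize:
  assumes pos: "\<And>x. 0 < ht x" and leaf_size: "\<And>l. L l \<Longrightarrow> esize sz l + 1 \<le> C"
    and "E_spine_leaf ht L h t"
  shows "esize sz t + 1 \<le> h * C + 1"
proof -
  obtain g where g: "t = E g" "spine L g" "spine_rank ht g \<le> h"
    using assms(3) unfolding E_spine_leaf_def by blast
  have "esize sz g + 1 \<le> spine_rank ht g * C" using spine_esize[of ht, OF pos leaf_size g(2)] .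
  also have "\<dots> \<le> h * C" using g(3) by simp
  finally show ?thesis using g(1) by simp
qed

lemma bounded_mono: "bounded rel sz t x \<Longrightarrow> t \<le> t' \<Longrightarrow> bounded rel sz t' x"
  unfolding bounded_def using order_trans by blast

lemma pow2_pred_mult_le:
  assumes "0 < h"
  shows "(2 ^ h - 1) * (h * (s + 2) + 1) \<le> (2::nat) ^ h * h * (s + 4)"
proof -
  have "(2 ^ h - 1) * (h * (s + 2) + 1) \<le> (2::nat) ^ h * (h * (s + 2) + 1)"
    by (intro mult_right_mono) simp_all
  also have "\<dots> \<le> 2 ^ h * (h * (s + 4))"
    using assms by (intro mult_left_mono) (simp_all add: algebra_simps)
  finally show ?thesis by (simp add: mult.assoc)
qed

theorem mainTheorem7:
  fixes sz ht :: "'a \<Rightarrow> nat" and step :: "'a \<Rightarrow> 'a \<Rightarrow> bool" and s :: nat and d :: 'a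
  assumes "proof_notation_system sz ht step"
    and "bounded step sz s d"
  shows "bounded (estep step) (esize sz) (ht d * (s + 2)) (E (Base d))
       \<and> bounded (estep step) (esize sz) (2 ^ ht d * ht d * (s + 4)) (E (E (Base d)))"
proof
  have pos: "\<And>x. 0 < ht x" using assms(1) by (simp add: proof_notation_system_def)
  define L\<^sub>0 where "L\<^sub>0 = Base_reduct step d"
  define L\<^sub>1 where "L\<^sub>1 = E_spine_leaf ht L\<^sub>0 1"
  define L\<^sub>2 where "L\<^sub>2 = E_spine_leaf ht L\<^sub>1 (ht d)"
  have closed\<^sub>0: "reduction_closed step ht L\<^sub>0" by (simp add: L\<^sub>0_def reduction_closed_Base_reduct)
  have size\<^sub>0: "esize sz l + 1 \<le> s + 1" if "L\<^sub>0 l" for l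
    using that assms(2) by (auto simp: L\<^sub>0_def Base_reduct_def bounded_def)
  have closed\<^sub>1: "reduction_closed step ht L\<^sub>1"
    unfolding L\<^sub>1_def by (rule reduction_closed_E_spine_leaf[OF assms(1) closed\<^sub>0])
  have size\<^sub>1: "esize sz l + 1 \<le> s + 2" if "L\<^sub>1 l" for l
    using E_spine_leaf_esize[of ht, OF pos size\<^sub>0, where h=1] that by (simp add: L\<^sub>1_def)
  have spine\<^sub>1: "spine L\<^sub>1 (E (Base d))"
    by (auto simp: L\<^sub>1_def L\<^sub>0_def E_spine_leaf_def Base_reduct_def intro!: spine.leaf)
  show "bounded (estep step) (esize sz) (ht d * (s + 2)) (E (Base d))"
    using spine_bounded[OF assms(1) closed\<^sub>1 size\<^sub>1 spine\<^sub>1] by simp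
  have spine\<^sub>2: "spine L\<^sub>2 (E (E (Base d)))"
    using spine\<^sub>1 by (auto simp: L\<^sub>2_def E_spine_leaf_def intro!: spine.leaf)
  have closed\<^sub>2: "reduction_closed step ht L\<^sub>2"
    unfolding L\<^sub>2_def by (rule reduction_closed_E_spine_leaf[OF assms(1) closed\<^sub>1])
  have size\<^sub>2: "esize sz l + 1 \<le> ht d * (s + 2) + 1" if "L\<^sub>2 l" for l
    using E_spine_leaf_esize[of ht, OF pos size\<^sub>1] that by (simp add: L\<^sub>2_def)
  have "bounded (estep step) (esize sz) ((2 ^ ht d - 1) * (ht d * (s + 2) + 1)) (E (E (Base d)))"
    using spine_bounded[OF assms(1) closed\<^sub>2 size\<^sub>2 spine\<^sub>2] by simp
  then show "bounded (estep step) (esize sz) (2 ^ ht d * ht d * (s + 4)) (E (E (Base d)))"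
    by (rule bounded_mono) (rule pow2_pred_mult_le[OF pos])
qed

end
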